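(* Let $G$ be a finite abelian group, let $t\ge2$, and let $H_1,\dots,H_t$ be distinct subgroups of $G$ and $D$ a subgroup with $H_i\cap H_j=D$ for all $i\neq j$ and $|H_i:D|>2$ for all $1\le i\le t$. Let $H=H_1+\dots+H_t$. Let $\mathcal{A}$ consist of the following subsets of $G$: (1) $A_i=H_i\setminus D$ for $1\le i\le t$; (2) all cosets of $D$ that are contained in $H$ but not contained in $H_1\cup\dots\cup H_t$; (3) for some chosen set (possibly empty) of cosets of $H$ different from $H$ itself, all the cosets of $D$ lying within those cosets of $H$. Then $\mathcal{A}$ is a bimodal collection of pairwise disjoint subsets of $G$; moreover, the members $S$ of $\mathcal{A}$ with $|S|$ smaller than the order of the internal difference group of $S$ are exactly $A_1,\dots,A_t$, the internal difference group of $A_i$ is $H_i$, and $(H_i)\setminus A_i=D$ is a subgroup (so $\mathcal{A}$ is in canonical position).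
   Context: $G$ is written additively. The internal difference group of a subset $S\subseteq G$ is the subgroup generated by all $x-y$ with $x,y\in S$. A collection $\{A_1,\dots,A_m\}$ of pairwise disjoint subsets of $G$ is bimodal if for every $i$ and every $\delta\in G\setminus\{0\}$, the number $N_i(\delta)$ of pairs $(a,b)$ with $a\in A_i$, $b\in A_j$ for some $j\neq i$, and $a-b=\delta$, satisfies $N_i(\delta)\in\{0,|A_i|\}$. *)

theory Defs
  imports Main "HOL-Computational_Algebra.Group_Closure" "HOL-Library.Disjoint_Sets"
begin

text \<open>A subgroup of an additive abelian group (the ambient group G is the whole type).\<close>
definition is_subgroup :: "'a::ab_group_add set \<Rightarrow> bool" where
  "is_subgroup H \<longleftrightarrow> 0 \<in> H \<and> (\<forall>x\<in>H. \<forall>y\<in>H. x - y \<in> H)"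

definition int_diff_group :: "'a::ab_group_add set \<Rightarrow> 'a set" where
  "int_diff_group S = group_closure {x - y | x y. x \<in> S \<and> y \<in> S}"

definition coset :: "'a::ab_group_add \<Rightarrow> 'a set \<Rightarrow> 'a set" where
  "coset g K = (\<lambda>x. g + x) ` K"

definition sumset_fam :: "nat \<Rightarrow> (nat \<Rightarrow> 'a::ab_group_add set) \<Rightarrow> 'a set" where
  "sumset_fam t H = {\<Sum>i\<in>{1..t}. f i | f. \<forall>i\<in>{1..t}. f i \<in> H i}"

definition N_count :: "'a::ab_group_add set set \<Rightarrow> 'a set \<Rightarrow> 'a \<Rightarrow> nat" where
  "N_count \<A> A \<delta> = card {(a, b). a \<in> A \<and> b \<in> \<Union>(\<A> - {A}) \<and> a - b = \<delta>}"

definition bimodal :: "'a::ab_group_add set set \<Rightarrow> bool" where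
  "bimodal \<A> \<longleftrightarrow> disjoint \<A> \<and>
     (\<forall>A\<in>\<A>. \<forall>\<delta>. \<delta> \<noteq> 0 \<longrightarrow> N_count \<A> A \<delta> \<in> {0, card A})"

end

theory Submission
  imports Defs
begin

text \<open>Every member of the collection is D-periodic (a union of cosets of D), the members are
  disjoint, and their union is (H - D) \<union> \<Union>Cs. Hence the other members of a D-coset X form a
  D-periodic set, and shifting X by \<delta> lands entirely inside or entirely outside it. For
  A i = H i - D: if \<delta> \<in> H i, the shift stays in H i, which meets the union only in A i; if
  \<delta> \<notin> H i, the shift avoids H i, and off H i the other members cover exactly H \<union> \<Union>Cs, which is
  H i-periodic. Either way N(\<delta>) \<in> {0, card X}. Because |H i : D| > 2, every element of H i is a
  difference of two elements of A i, so A i has difference group H i, whereas a coset of D has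
  difference group D and is therefore not smaller than it.\<close>

section \<open>Subgroups and cosets\<close>

lemma is_subgroup_0: "is_subgroup H \<Longrightarrow> 0 \<in> H"
  by (simp add: is_subgroup_def)

lemma is_subgroup_diff: "is_subgroup H \<Longrightarrow> x \<in> H \<Longrightarrow> y \<in> H \<Longrightarrow> x - y \<in> H"
  by (simp add: is_subgroup_def)

lemma is_subgroup_uminus: "is_subgroup H \<Longrightarrow> x \<in> H \<Longrightarrow> - x \<in> H"
  using is_subgroup_diff[of H 0 x] by (simp add: is_subgroup_0)

lemma is_subgroup_add: "is_subgroup H \<Longrightarrow> x \<in> H \<Longrightarrow> y \<in> H \<Longrightarrow> x + y \<in> H"
  using is_subgroup_diff[of H x "- y"] by (simp add: is_subgroup_uminus)

lemma group_closure_subgroup_eq: "is_subgroup H \<Longrightarrow> group_closure H = H"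
proof
  show "group_closure H \<subseteq> H" if "is_subgroup H"
  proof
    show "x \<in> H" if "x \<in> group_closure H" for x
      using \<open>x \<in> group_closure H\<close>
      by induct (use \<open>is_subgroup H\<close> in \<open>auto simp: is_subgroup_0 is_subgroup_diff\<close>)
  qed
qed (auto intro: group_closure.base)

lemma int_diff_group_eqI:
  "is_subgroup H \<Longrightarrow> {x - y | x y. x \<in> S \<and> y \<in> S} = H \<Longrightarrow> int_diff_group S = H"
  by (simp add: int_diff_group_def group_closure_subgroup_eq)

lemma is_subgroup_sumset_fam:
  assumes "\<forall>i\<in>{1..t}. is_subgroup (H i)"
  shows "is_subgroup (sumset_fam t H)"
  unfolding is_subgroup_def sumset_fam_def
proof safe
  show "\<exists>f. 0 = (\<Sum>i\<in>{1..t}. f i) \<and> (\<forall>i\<in>{1..t}. f i \<in> H i)"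
    by (intro exI[of _ "\<lambda>_. 0"]) (simp add: assms is_subgroup_0)
  show "\<exists>h. (\<Sum>i\<in>{1..t}. f i) - (\<Sum>i\<in>{1..t}. g i) = (\<Sum>i\<in>{1..t}. h i) \<and> (\<forall>i\<in>{1..t}. h i \<in> H i)"
    if "\<forall>i\<in>{1..t}. f i \<in> H i" "\<forall>i\<in>{1..t}. g i \<in> H i" for f g
    by (intro exI[of _ "\<lambda>i. f i - g i"]) (simp add: that assms sum_subtractf is_subgroup_diff)
qed

lemma subset_sumset_fam:
  assumes "\<forall>j\<in>{1..t}. 0 \<in> H j" "i \<in> {1..t}"
  shows "H i \<subseteq> sumset_fam t H"
proof
  fix x assume "x \<in> H i"
  then have "x = (\<Sum>j\<in>{1..t}. if j = i then x else 0) \<and> (\<forall>j\<in>{1..t}. (if j = i then x else 0) \<in> H j)"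
    using assms by auto
  then show "x \<in> sumset_fam t H"
    unfolding sumset_fam_def by blast
qed

lemma mem_coset_iff: "x \<in> coset g K \<longleftrightarrow> x - g \<in> K"
  unfolding coset_def image_iff by (metis add_diff_cancel_left' diff_add_cancel add.commute)

lemma coset_0 [simp]: "coset 0 K = K"
  by (simp add: coset_def)

lemma card_coset: "card (coset g K) = card K"
  unfolding coset_def by (rule card_image) (simp add: inj_on_def)

lemma coset_self: "is_subgroup K \<Longrightarrow> g \<in> coset g K"
  by (simp add: mem_coset_iff is_subgroup_0)

lemma coset_eq_if_mem:
  assumes "is_subgroup K" "y \<in> coset g K"
  shows "coset y K = coset g K"
proof -
  have "y - g \<in> K"
    using assms(2) by (simp add: mem_coset_iff)
  have "x - y \<in> K \<longleftrightarrow> x - g \<in> K" for x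
    using is_subgroup_add[OF assms(1) _ \<open>y - g \<in> K\<close>, of "x - y"]
      is_subgroup_diff[OF assms(1) _ \<open>y - g \<in> K\<close>, of "x - g"]
    by auto
  then show ?thesis
    by (auto simp: mem_coset_iff)
qed

lemma coset_disjoint:
  "is_subgroup K \<Longrightarrow> coset g K \<noteq> coset h K \<Longrightarrow> coset g K \<inter> coset h K = {}"
  using coset_eq_if_mem by blast

lemma coset_subset_if_meets:
  assumes "is_subgroup K" "is_subgroup D" "D \<subseteq> K" "coset g D \<inter> K \<noteq> {}"
  shows "coset g D \<subseteq> K"
proof
  obtain y where "y \<in> coset g D" "y \<in> K"
    using assms(4) by blast
  fix x assume "x \<in> coset g D"
  then have "x \<in> coset y D"
    using coset_eq_if_mem[OF assms(2) \<open>y \<in> coset g D\<close>] by simp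
  then have "x - y \<in> D"
    by (simp add: mem_coset_iff)
  then have "x - y \<in> K"
    using assms(3) by blast
  then show "x \<in> K"
    using is_subgroup_add[OF assms(1) _ \<open>y \<in> K\<close>] by force
qed

lemma coset_diff_mem: "is_subgroup K \<Longrightarrow> x \<in> coset g K \<Longrightarrow> y \<in> coset g K \<Longrightarrow> x - y \<in> K"
  using is_subgroup_diff[of K "x - g" "y - g"] by (simp add: mem_coset_iff)

lemma disjoint_cosets:
  assumes "is_subgroup K" "\<forall>X\<in>\<X>. \<exists>g. X = coset g K"
  shows "disjoint \<X>"
proof (rule disjointI)
  fix X Y assume "X \<in> \<X>" "Y \<in> \<X>" "X \<noteq> Y"
  then show "X \<inter> Y = {}"
    using assms coset_disjoint by metis
qed

lemma int_diff_group_coset: "is_subgroup K \<Longrightarrow> int_diff_group (coset g K) = K"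
proof (rule int_diff_group_eqI)
  assume "is_subgroup K"
  show "{x - y | x y. x \<in> coset g K \<and> y \<in> coset g K} = K"
  proof safe
    show "x - y \<in> K" if "x \<in> coset g K" "y \<in> coset g K" for x y
      using \<open>is_subgroup K\<close> that by (rule coset_diff_mem)
    show "\<exists>x y. k = x - y \<and> x \<in> coset g K \<and> y \<in> coset g K" if "k \<in> K" for k
      using that \<open>is_subgroup K\<close>
      by (intro exI[of _ "g + k"] exI[of _ g]) (simp add: mem_coset_iff is_subgroup_0)
  qed
qed

text \<open>For h \<in> H pick b \<in> H outside D \<union> (D - h), possible since 2 |D| < |H|; then h = (b + h) - b.\<close>
lemma differences_subgroup_Diff:
  assumes "is_subgroup H" "finite H" "finite D" "2 * card D < card H"
  shows "{x - y | x y. x \<in> H - D \<and> y \<in> H - D} = H"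
proof safe
  show "x - y \<in> H" if "x \<in> H" "y \<in> H" for x y
    using that assms(1) by (simp add: is_subgroup_diff)
next
  fix h assume "h \<in> H"
  have "card (D \<union> coset (- h) D) \<le> card D + card (coset (- h) D)"
    by (rule card_Un_le)
  moreover have "finite (D \<union> coset (- h) D)"
    using assms(3) by (simp add: coset_def)
  ultimately have "\<not> H \<subseteq> D \<union> coset (- h) D"
    using assms(4) card_mono[of "D \<union> coset (- h) D" H] by (auto simp: card_coset)
  then obtain b where b: "b \<in> H" "b \<notin> D" "b \<notin> coset (- h) D"
    by blast
  then have "b + h \<notin> D"
    by (simp add: mem_coset_iff)
  with b have "b + h \<in> H - D" "b \<in> H - D"
    using is_subgroup_add[OF assms(1) \<open>b \<in> H\<close> \<open>h \<in> H\<close>] by auto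
  moreover have "h = (b + h) - b"
    by simp
  ultimately show "\<exists>x y. h = x - y \<and> x \<in> H - D \<and> y \<in> H - D"
    by blast
qed

section \<open>Periodic sets\<close>

definition periodic :: "'a::ab_group_add set \<Rightarrow> 'a set \<Rightarrow> bool" where
  "periodic P W \<longleftrightarrow> (\<forall>w\<in>W. \<forall>p\<in>P. w + p \<in> W)"

lemma periodic_subgroup: "is_subgroup P \<Longrightarrow> periodic P P"
  by (simp add: periodic_def is_subgroup_add)

lemma periodic_coset: "is_subgroup P \<Longrightarrow> periodic P (coset g P)"
  unfolding periodic_def
proof (intro ballI)
  fix w p assume "is_subgroup P" "w \<in> coset g P" "p \<in> P"
  then have "(w - g) + p \<in> P"
    by (simp add: mem_coset_iff is_subgroup_add)
  then show "w + p \<in> coset g P"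
    by (simp add: mem_coset_iff diff_add_eq)
qed

lemma periodic_mono: "periodic P W \<Longrightarrow> Q \<subseteq> P \<Longrightarrow> periodic Q W"
  by (auto simp: periodic_def)

lemma periodic_Union: "(\<And>Y. Y \<in> \<Y> \<Longrightarrow> periodic P Y) \<Longrightarrow> periodic P (\<Union>\<Y>)"
  by (fastforce simp: periodic_def)

lemma periodic_Un: "periodic P V \<Longrightarrow> periodic P W \<Longrightarrow> periodic P (V \<union> W)"
  by (auto simp: periodic_def)

lemma periodic_Diff:
  assumes "is_subgroup P" "periodic P V" "periodic P W"
  shows "periodic P (V - W)"
  unfolding periodic_def
proof (intro ballI)
  fix x p assume "x \<in> V - W" "p \<in> P"
  have "x + p \<notin> W"
  proof
    assume "x + p \<in> W"
    then have "(x + p) + - p \<in> W"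
      using assms(3) is_subgroup_uminus[OF assms(1) \<open>p \<in> P\<close>] unfolding periodic_def by blast
    with \<open>x \<in> V - W\<close> show False by simp
  qed
  then show "x + p \<in> V - W"
    using assms(2) \<open>x \<in> V - W\<close> \<open>p \<in> P\<close> unfolding periodic_def by blast
qed

lemma periodic_shift_dichotomy:
  assumes "periodic P W" "\<forall>a\<in>A. \<forall>b\<in>A. a - b \<in> P"
  shows "(\<forall>a\<in>A. a - \<delta> \<in> W) \<or> (\<forall>a\<in>A. a - \<delta> \<notin> W)"
proof -
  have "a' - \<delta> \<in> W" if "a \<in> A" "a' \<in> A" "a - \<delta> \<in> W" for a a'
  proof -
    have "(a - \<delta>) + (a' - a) \<in> W"
      using assms that unfolding periodic_def by blast
    then show ?thesis by simp
  qed
  then show ?thesis by blast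
qed

lemma card_pairs_with_difference:
  fixes A :: "'a::ab_group_add set"
  assumes "finite A" "(\<forall>a\<in>A. a - \<delta> \<in> W) \<or> (\<forall>a\<in>A. a - \<delta> \<notin> W)"
  shows "card {(a, b). a \<in> A \<and> b \<in> W \<and> a - b = \<delta>} \<in> {0, card A}"
  using assms(2)
proof
  assume "\<forall>a\<in>A. a - \<delta> \<in> W"
  then have "{(a, b). a \<in> A \<and> b \<in> W \<and> a - b = \<delta>} = (\<lambda>a. (a, a - \<delta>)) ` A"
    by (auto simp: image_iff)
  moreover have "card ((\<lambda>a. (a, a - \<delta>)) ` A) = card A"
    by (rule card_image) (simp add: inj_on_def)
  ultimately show ?thesis
    by simp
next
  assume "\<forall>a\<in>A. a - \<delta> \<notin> W"
  then have "{(a, b). a \<in> A \<and> b \<in> W \<and> a - b = \<delta>} = {}"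
    by auto
  then show ?thesis
    by (metis card.empty insertI1)
qed

lemma N_count_dichotomy:
  "finite A \<Longrightarrow> (\<forall>a\<in>A. a - \<delta> \<in> \<Union>(\<A> - {A})) \<or> (\<forall>a\<in>A. a - \<delta> \<notin> \<Union>(\<A> - {A}))
    \<Longrightarrow> N_count \<A> A \<delta> \<in> {0, card A}"
  unfolding N_count_def by (rule card_pairs_with_difference)

section \<open>The configuration\<close>

locale canonical_configuration =
  fixes H :: "nat \<Rightarrow> 'a::{ab_group_add, finite} set" and D :: "'a set"
    and t :: nat and Cs :: "'a set set"
  assumes two_le_t: "2 \<le> t"
    and subgroup_H: "i \<in> {1..t} \<Longrightarrow> is_subgroup (H i)"
    and subgroup_D: "is_subgroup D"
    and H_Int_H: "i \<in> {1..t} \<Longrightarrow> j \<in> {1..t} \<Longrightarrow> i \<noteq> j \<Longrightarrow> H i \<inter> H j = D"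
    and index_gt_2: "i \<in> {1..t} \<Longrightarrow> 2 < card (H i) div card D"
    and Cs_cosets: "K \<in> Cs \<Longrightarrow> (\<exists>g. K = coset g (sumset_fam t H)) \<and> K \<noteq> sumset_fam t H"
begin

abbreviation Hsum :: "'a set" where
  "Hsum \<equiv> sumset_fam t H"

definition A :: "nat \<Rightarrow> 'a set" where
  "A i = H i - D"

definition inner_cosets :: "'a set set" where
  "inner_cosets = {coset g D | g. coset g D \<subseteq> Hsum \<and> \<not> coset g D \<subseteq> (\<Union>i\<in>{1..t}. H i)}"

definition outer_cosets :: "'a set set" where
  "outer_cosets = {coset g D | g. \<exists>K\<in>Cs. coset g D \<subseteq> K}"

definition collection :: "'a set set" where
  "collection = A ` {1..t} \<union> inner_cosets \<union> outer_cosets"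

lemma D_subset_H:
  assumes "i \<in> {1..t}"
  shows "D \<subseteq> H i"
proof -
  obtain j where "j \<in> {1..t}" "j \<noteq> i"
  proof (cases "i = 1")
    case True
    then show ?thesis
      using that[of 2] two_le_t by simp
  next
    case False
    then show ?thesis
      using that[of 1] assms by simp
  qed
  then show ?thesis
    using H_Int_H[OF assms] by blast
qed

lemma two_card_D_less: "i \<in> {1..t} \<Longrightarrow> 2 * card D < card (H i)"
proof -
  assume "i \<in> {1..t}"
  have "0 < card D"
    using is_subgroup_0[OF subgroup_D] by (auto simp: card_gt_0_iff)
  moreover have "3 * card D \<le> card (H i) div card D * card D"
    using index_gt_2[OF \<open>i \<in> {1..t}\<close>] by (intro mult_right_mono) simp_all
  moreover have "card (H i) div card D * card D \<le> card (H i)"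
    by (rule div_times_less_eq_dividend)
  ultimately show ?thesis
    by linarith
qed

lemma subgroup_Hsum: "is_subgroup Hsum"
  using subgroup_H by (simp add: is_subgroup_sumset_fam)

lemma H_subset_Hsum: "i \<in> {1..t} \<Longrightarrow> H i \<subseteq> Hsum"
  by (rule subset_sumset_fam) (simp_all add: subgroup_H is_subgroup_0)

lemma D_subset_Hsum: "D \<subseteq> Hsum"
proof -
  have "1 \<in> {1..t}"
    using two_le_t by simp
  then show ?thesis
    using D_subset_H H_subset_Hsum by blast
qed

lemma Cs_Int_Hsum: "K \<in> Cs \<Longrightarrow> K \<inter> Hsum = {}"
  using Cs_cosets coset_disjoint[OF subgroup_Hsum, of _ 0] by (metis coset_0)

lemma periodic_Cs: "K \<in> Cs \<Longrightarrow> periodic Hsum K"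
  using Cs_cosets periodic_coset[OF subgroup_Hsum] by metis

lemma periodic_Hsum_Un_Cs: "periodic Hsum (Hsum \<union> \<Union>Cs)"
  using periodic_Un[OF periodic_subgroup[OF subgroup_Hsum] periodic_Union[OF periodic_Cs]] .

lemma coset_subset_H_if_meets:
  "i \<in> {1..t} \<Longrightarrow> coset g D \<inter> H i \<noteq> {} \<Longrightarrow> coset g D \<subseteq> H i"
  by (rule coset_subset_if_meets[OF subgroup_H subgroup_D D_subset_H])

lemma A_subset_H: "A i \<subseteq> H i"
  by (simp add: A_def)

lemma inner_outer_cosets_eq_coset: "X \<in> inner_cosets \<union> outer_cosets \<Longrightarrow> \<exists>g. X = coset g D"
  by (auto simp: inner_cosets_def outer_cosets_def)

lemma coset_member_Int_H:
  assumes "X \<in> inner_cosets \<union> outer_cosets" "i \<in> {1..t}"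
  shows "X \<inter> H i = {}"
  using assms(1)
proof
  assume "X \<in> inner_cosets"
  then obtain g where "X = coset g D" "\<not> X \<subseteq> (\<Union>j\<in>{1..t}. H j)"
    by (auto simp: inner_cosets_def)
  then show ?thesis
    using coset_subset_H_if_meets[OF assms(2)] assms(2) by blast
next
  assume "X \<in> outer_cosets"
  then obtain K where "K \<in> Cs" "X \<subseteq> K"
    by (auto simp: outer_cosets_def)
  then show ?thesis
    using Cs_Int_Hsum H_subset_Hsum[OF assms(2)] by blast
qed

lemma disjoint_collection: "disjoint collection"
  unfolding collection_def Un_assoc
proof (rule disjoint_union)
  show "disjoint (A ` {1..t})"
  proof (rule disjointI)
    fix X Y assume "X \<in> A ` {1..t}" "Y \<in> A ` {1..t}" "X \<noteq> Y"
    then obtain i j where "i \<in> {1..t}" "j \<in> {1..t}" "X = A i" "Y = A j"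
      by blast
    with \<open>X \<noteq> Y\<close> have "H i \<inter> H j = D"
      using H_Int_H by blast
    then show "X \<inter> Y = {}"
      using \<open>X = A i\<close> \<open>Y = A j\<close> by (auto simp: A_def)
  qed
  show "disjoint (inner_cosets \<union> outer_cosets)"
    using subgroup_D by (rule disjoint_cosets) (use inner_outer_cosets_eq_coset in blast)
  show "\<Union>(A ` {1..t}) \<inter> \<Union>(inner_cosets \<union> outer_cosets) = {}"
    using coset_member_Int_H A_subset_H by blast
qed

lemma Union_A: "\<Union>(A ` {1..t}) = (\<Union>i\<in>{1..t}. H i) - D"
  by (auto simp: A_def)

lemma Union_inner_cosets: "\<Union>inner_cosets = Hsum - (\<Union>i\<in>{1..t}. H i)"
proof
  show "\<Union>inner_cosets \<subseteq> Hsum - (\<Union>i\<in>{1..t}. H i)"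
  proof
    fix x assume "x \<in> \<Union>inner_cosets"
    then obtain X where "X \<in> inner_cosets" "x \<in> X"
      by blast
    moreover have "X \<inter> H i = {}" if "i \<in> {1..t}" for i
      using coset_member_Int_H \<open>X \<in> inner_cosets\<close> that by blast
    moreover have "X \<subseteq> Hsum"
      using \<open>X \<in> inner_cosets\<close> by (auto simp: inner_cosets_def)
    ultimately show "x \<in> Hsum - (\<Union>i\<in>{1..t}. H i)"
      by blast
  qed
  show "Hsum - (\<Union>i\<in>{1..t}. H i) \<subseteq> \<Union>inner_cosets"
  proof
    fix x assume x: "x \<in> Hsum - (\<Union>i\<in>{1..t}. H i)"
    have "x \<in> coset x D"
      by (rule coset_self[OF subgroup_D])
    moreover have "coset x D \<subseteq> Hsum"
      using coset_subset_if_meets[OF subgroup_Hsum subgroup_D D_subset_Hsum] x \<open>x \<in> coset x D\<close> by blast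
    ultimately have "coset x D \<in> inner_cosets"
      using x by (auto simp: inner_cosets_def)
    with \<open>x \<in> coset x D\<close> show "x \<in> \<Union>inner_cosets"
      by blast
  qed
qed

lemma Union_outer_cosets: "\<Union>outer_cosets = \<Union>Cs"
proof
  show "\<Union>outer_cosets \<subseteq> \<Union>Cs"
    by (auto simp: outer_cosets_def)
  show "\<Union>Cs \<subseteq> \<Union>outer_cosets"
  proof
    fix x assume "x \<in> \<Union>Cs"
    then obtain K where K: "K \<in> Cs" "x \<in> K"
      by blast
    have "coset x D \<subseteq> K"
    proof
      fix y assume "y \<in> coset x D"
      then have "y - x \<in> Hsum"
        using D_subset_Hsum by (auto simp: mem_coset_iff)
      then have "x + (y - x) \<in> K"
        using periodic_Cs[OF K(1)] K(2) unfolding periodic_def by blast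
      then show "y \<in> K"
        by simp
    qed
    then have "coset x D \<in> outer_cosets"
      using K(1) by (auto simp: outer_cosets_def)
    then show "x \<in> \<Union>outer_cosets"
      using coset_self[OF subgroup_D, of x] by blast
  qed
qed

lemma Union_collection: "\<Union>collection = (Hsum - D) \<union> \<Union>Cs"
proof -
  have "D \<subseteq> (\<Union>i\<in>{1..t}. H i)" "(\<Union>i\<in>{1..t}. H i) \<subseteq> Hsum"
    using D_subset_H H_subset_Hsum two_le_t by force+
  then show ?thesis
    unfolding collection_def Union_Un_distrib Union_A Union_inner_cosets Union_outer_cosets
    by blast
qed

lemma H_Int_Union_collection: "i \<in> {1..t} \<Longrightarrow> H i \<inter> \<Union>collection = A i"
  using H_subset_Hsum Cs_Int_Hsum by (auto simp: Union_collection A_def)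

lemma periodic_D_collection: "X \<in> collection \<Longrightarrow> periodic D X"
  unfolding collection_def
proof (elim UnE)
  assume "X \<in> A ` {1..t}"
  then obtain i where "i \<in> {1..t}" "X = H i - D"
    by (auto simp: A_def)
  then show ?thesis
    using periodic_Diff[OF subgroup_D periodic_mono[OF periodic_subgroup[OF subgroup_H] D_subset_H]
        periodic_subgroup[OF subgroup_D]] by blast
qed (use inner_outer_cosets_eq_coset periodic_coset[OF subgroup_D] in blast)+

lemma collection_cases:
  assumes "X \<in> collection"
  obtains (A) i where "i \<in> {1..t}" "X = A i" | (coset) g where "X = coset g D"
  using assms inner_outer_cosets_eq_coset unfolding collection_def by blast

lemma shift_dichotomy_coset:
  assumes "X \<in> collection" "X = coset g D"
  shows "(\<forall>a\<in>X. a - \<delta> \<in> \<Union>collection - X) \<or> (\<forall>a\<in>X. a - \<delta> \<notin> \<Union>collection - X)"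
proof (rule periodic_shift_dichotomy)
  show "periodic D (\<Union>collection - X)"
    using periodic_Diff[OF subgroup_D periodic_Union periodic_D_collection[OF assms(1)]]
      periodic_D_collection by blast
  show "\<forall>a\<in>X. \<forall>b\<in>X. a - b \<in> D"
    using assms(2) coset_diff_mem[OF subgroup_D] by blast
qed

lemma shift_dichotomy_A:
  assumes "i \<in> {1..t}"
  shows "(\<forall>a\<in>A i. a - \<delta> \<in> \<Union>collection - A i) \<or> (\<forall>a\<in>A i. a - \<delta> \<notin> \<Union>collection - A i)"
proof (cases "\<delta> \<in> H i")
  case True
  have "a - \<delta> \<notin> \<Union>collection - A i" if "a \<in> A i" for a
  proof -
    have "a - \<delta> \<in> H i"
      using that A_subset_H is_subgroup_diff[OF subgroup_H[OF assms] _ True] by blast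
    then show ?thesis
      using H_Int_Union_collection[OF assms] by blast
  qed
  then show ?thesis
    by blast
next
  case False
  txt \<open>Off H i the other members cover exactly Hsum \<union> \<Union>Cs, a union of cosets of Hsum \<supseteq> H i.\<close>
  have off_H: "a - \<delta> \<in> \<Union>collection - A i \<longleftrightarrow> a - \<delta> \<in> Hsum \<union> \<Union>Cs" if "a \<in> A i" for a
  proof -
    have "a - \<delta> \<notin> H i"
      using that A_subset_H is_subgroup_diff[OF subgroup_H[OF assms], of a "a - \<delta>"] False by auto
    then show ?thesis
      using D_subset_H[OF assms] A_subset_H by (auto simp: Union_collection)
  qed
  have "(\<forall>a\<in>A i. a - \<delta> \<in> Hsum \<union> \<Union>Cs) \<or> (\<forall>a\<in>A i. a - \<delta> \<notin> Hsum \<union> \<Union>Cs)"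
  proof (rule periodic_shift_dichotomy)
    show "periodic (H i) (Hsum \<union> \<Union>Cs)"
      using periodic_Hsum_Un_Cs H_subset_Hsum[OF assms] by (rule periodic_mono)
    show "\<forall>a\<in>A i. \<forall>b\<in>A i. a - b \<in> H i"
      using A_subset_H is_subgroup_diff[OF subgroup_H[OF assms]] by blast
  qed
  then show ?thesis
    using off_H by blast
qed

lemma bimodal_collection: "bimodal collection"
  unfolding bimodal_def
proof (intro conjI disjoint_collection ballI allI impI)
  fix X \<delta> assume "X \<in> collection"
  have "\<Union>(collection - {X}) = \<Union>collection - X"
    using diff_Union_pairwise_disjoint[OF disjoint_collection, of "{X}"] \<open>X \<in> collection\<close> by simp
  moreover have "(\<forall>a\<in>X. a - \<delta> \<in> \<Union>collection - X) \<or> (\<forall>a\<in>X. a - \<delta> \<notin> \<Union>collection - X)"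
    using \<open>X \<in> collection\<close>
  proof (cases rule: collection_cases)
    case (A i)
    then show ?thesis
      using shift_dichotomy_A[OF A(1)] by (simp only:)
  next
    case (coset g)
    then show ?thesis
      by (rule shift_dichotomy_coset[OF \<open>X \<in> collection\<close>])
  qed
  ultimately have "(\<forall>a\<in>X. a - \<delta> \<in> \<Union>(collection - {X})) \<or> (\<forall>a\<in>X. a - \<delta> \<notin> \<Union>(collection - {X}))"
    by (simp only:)
  then show "N_count collection X \<delta> \<in> {0, card X}"
    by (rule N_count_dichotomy[OF finite])
qed

lemma int_diff_group_A: "i \<in> {1..t} \<Longrightarrow> int_diff_group (A i) = H i"
  unfolding A_def
  by (intro int_diff_group_eqI differences_subgroup_Diff subgroup_H two_card_D_less finite)

lemma card_less_int_diff_group_iff: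
  assumes "S \<in> collection"
  shows "card S < card (int_diff_group S) \<longleftrightarrow> S \<in> A ` {1..t}"
proof
  assume "S \<in> A ` {1..t}"
  then obtain i where "i \<in> {1..t}" "S = A i"
    by blast
  moreover have "A i \<subset> H i"
    using is_subgroup_0[OF subgroup_D] D_subset_H[OF \<open>i \<in> {1..t}\<close>] by (auto simp: A_def)
  ultimately show "card S < card (int_diff_group S)"
    by (simp add: int_diff_group_A psubset_card_mono)
next
  assume "card S < card (int_diff_group S)"
  with assms show "S \<in> A ` {1..t}"
    by (cases rule: collection_cases) (simp_all add: int_diff_group_coset[OF subgroup_D] card_coset)
qed

lemma small_members_collection: "{S \<in> collection. card S < card (int_diff_group S)} = A ` {1..t}"
  using card_less_int_diff_group_iff by (auto simp: collection_def)

end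

theorem theorem3p11:
  fixes H :: "nat \<Rightarrow> ('a::{ab_group_add, finite}) set"
    and D :: "'a set" and t :: nat and Cs :: "'a set set"
  assumes t2: "t \<ge> 2"
    and subH: "\<forall>i\<in>{1..t}. is_subgroup (H i)"
    and distinct: "inj_on H {1..t}"
    and subD: "is_subgroup D"
    and inter: "\<forall>i\<in>{1..t}. \<forall>j\<in>{1..t}. i \<noteq> j \<longrightarrow> H i \<inter> H j = D"
    and index: "\<forall>i\<in>{1..t}. card (H i) div card D > 2"
    and Cs: "\<forall>K\<in>Cs. (\<exists>g. K = coset g (sumset_fam t H)) \<and> K \<noteq> sumset_fam t H"
  shows "let Hs = sumset_fam t H;
             A = (\<lambda>i. H i - D);
             \<A> = A ` {1..t}
                 \<union> {coset g D | g. coset g D \<subseteq> Hs \<and> \<not> coset g D \<subseteq> (\<Union>i\<in>{1..t}. H i)}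
                 \<union> {coset g D | g. \<exists>K\<in>Cs. coset g D \<subseteq> K}
         in bimodal \<A>
            \<and> {S \<in> \<A>. card S < card (int_diff_group S)} = A ` {1..t}
            \<and> (\<forall>i\<in>{1..t}. int_diff_group (A i) = H i \<and> H i - A i = D \<and> is_subgroup (H i - A i))"
proof -
  interpret canonical_configuration H D t Cs
    using t2 subH subD inter index Cs by unfold_locales auto
  show ?thesis
    unfolding Let_def
    using bimodal_collection small_members_collection int_diff_group_A D_subset_H subgroup_D
    unfolding collection_def inner_cosets_def outer_cosets_def A_def[abs_def]
    by (simp add: Diff_Diff_Int Int_absorb1)
qed

end
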